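(* Let $d\ge1$ and $\delta=(1\,2\,\cdots\,d)\in\mathrm{Sym}_d$. For any left-right matching, the associated top and bottom permutations satisfy $\pi^T\cdot\pi^B=\delta$; for any top-bottom matching, the associated left and right permutations satisfy $\pi^L\cdot\pi^R=\delta$.
   Context: Place $4d$ points on the boundary circle of a closed disk, labeled in counterclockwise cyclic order $T_1,L_1,B_1,R_1,T_2,L_2,B_2,R_2,\dots,T_d,L_d,B_d,R_d$. A left-right matching is a partition of $\{L_1,R_1,\dots,L_d,R_d\}$ into $d$ pairs that can be joined by pairwise disjoint arcs in the disk (a noncrossing perfect matching). Removing these arcs splits the disk into regions; the top partition $[\lambda]^T$ of $[d]$ puts $i,j$ in the same block iff $T_i,T_j$ lie in the same region, and the bottom partition $[\lambda]^B$ is defined likewise from the $B_i$. A top-bottom matching is defined in the same way with the $T$'s and $B$'s (cyclic order $T_1,B_1,\dots,T_d,B_d$), and it determines left and right partitions $[\lambda]^L,[\lambda]^R$ from the $L_i$'s and $R_i$'s. For a set partition of $[d]$, its permutation turns each block into a cycle listing its elements in increasing order; $\pi^T,\pi^B,\pi^L,\pi^R$ are the permutations of $[\lambda]^T,[\lambda]^B,[\lambda]^L,[\lambda]^R$. Products compose right to left (in $\pi^T\cdot\pi^B$, $\pi^B$ is applied first). *)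

theory Defs
  imports Main
begin

text \<open>Boundary points are encoded by positions 0..4d-1 in counterclockwise order:
  T_i = 4i-4, L_i = 4i-3, B_i = 4i-2, R_i = 4i-1 for i in 1..d.\<close>

definition Tpos :: "nat \<Rightarrow> nat" where "Tpos i = 4 * i - 4"
definition Lpos :: "nat \<Rightarrow> nat" where "Lpos i = 4 * i - 3"
definition Bpos :: "nat \<Rightarrow> nat" where "Bpos i = 4 * i - 2"
definition Rpos :: "nat \<Rightarrow> nat" where "Rpos i = 4 * i - 1"

definition perfect_matching :: "nat set set \<Rightarrow> nat set \<Rightarrow> bool" where
  "perfect_matching M S \<longleftrightarrow>
     (\<forall>e\<in>M. card e = 2 \<and> e \<subseteq> S) \<and> (\<forall>x\<in>S. \<exists>!e\<in>M. x \<in> e)"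

text \<open>Two chords cross iff their endpoints interleave (cutting the circle between
  the last and first position makes the cyclic order linear).\<close>
definition crosses :: "nat set \<Rightarrow> nat set \<Rightarrow> bool" where
  "crosses e f \<longleftrightarrow> (\<exists>a b c d. e = {a, b} \<and> f = {c, d} \<and> a < c \<and> c < b \<and> b < d)"

definition noncrossing_matching :: "nat set set \<Rightarrow> nat set \<Rightarrow> bool" where
  "noncrossing_matching M S \<longleftrightarrow> perfect_matching M S \<and>
     (\<forall>e\<in>M. \<forall>f\<in>M. e \<noteq> f \<longrightarrow> \<not> crosses e f)"

definition separates :: "nat set \<Rightarrow> nat \<Rightarrow> nat \<Rightarrow> bool" where
  "separates e x y \<longleftrightarrow> (\<exists>a b. e = {a, b} \<and> a < b \<and>
      ((a < x \<and> x < b) \<noteq> (a < y \<and> y < b)))"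

text \<open>Two boundary points (not endpoints of arcs) lie in the same region of the disk
  cut along the disjoint arcs iff no arc separates them.\<close>
definition same_region :: "nat set set \<Rightarrow> nat \<Rightarrow> nat \<Rightarrow> bool" where
  "same_region M x y \<longleftrightarrow> (\<forall>e\<in>M. \<not> separates e x y)"

definition region_partition :: "nat set set \<Rightarrow> (nat \<Rightarrow> nat) \<Rightarrow> nat \<Rightarrow> nat set set" where
  "region_partition M pos d =
     (\<lambda>i. {j \<in> {1..d}. same_region M (pos i) (pos j)}) ` {1..d}"

text \<open>Permutation of a set partition: each block becomes the cycle listing its
  elements in increasing order; identity off the ground set.\<close>
definition perm_of_partition :: "nat set set \<Rightarrow> nat \<Rightarrow> nat" where
  "perm_of_partition P i =
     (if \<exists>B\<in>P. i \<in> B then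
        (let B = (THE B. B \<in> P \<and> i \<in> B) in
           if \<exists>j\<in>B. i < j then Min {j \<in> B. i < j} else Min B)
      else i)"

definition long_cycle :: "nat \<Rightarrow> nat \<Rightarrow> nat" where
  "long_cycle d i = (if i \<in> {1..d} then (if i < d then i + 1 else 1) else i)"

end

theory Submission
  imports Defs
begin

(* A chord {a, b} separates two boundary points x < y exactly when one of a, b lies strictly
   between them.  In a noncrossing matching every chord has an even number of endpoints strictly
   inside the span (p, q) of any chord {p, q}, hence also in [p, q] and outside it.  So the two
   points next to the ends of a chord on the same side of it lie in one region, while points on
   opposite sides of it do not; this pins down the successor of an index in its block.

   In a left-right matching the matched points strictly between R_i and R_k are an odd number
   2(k - i) - 1, so R_i is matched with some L_j.  The chord R_i L_j puts B_i in the region of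
   B_j and T_j in the region of T_(i+1) (indices mod d), with no B or T of an index in between,
   so pi^B i = j and pi^T j = i + 1.  A top-bottom matching contains, likewise, a chord
   T_(i+1) B_j, which gives pi^R i = j and pi^L j = i + 1. *)

section \<open>Regions cut out by a noncrossing matching\<close>

lemma same_region_refl: "same_region M x x"
  by (auto simp: same_region_def separates_def)

lemma same_region_sym: "same_region M x y \<Longrightarrow> same_region M y x"
  unfolding same_region_def separates_def by metis

lemma same_region_trans: "same_region M x y \<Longrightarrow> same_region M y z \<Longrightarrow> same_region M x z"
  unfolding same_region_def separates_def by metis

lemma not_same_region_if_chord_separates:
  assumes "{p, q} \<in> M" "p < q" "(p < x \<and> x < q) \<noteq> (p < y \<and> y < q)"
  shows "\<not> same_region M x y"
  using assms unfolding same_region_def separates_def by blast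

lemma not_separates_if_even_between:
  assumes "card e = 2" "x \<le> y" "x \<notin> e" "y \<notin> e" "even (card (e \<inter> {x<..<y}))"
  shows "\<not> separates e x y"
proof
  assume "separates e x y"
  then obtain a b where e: "e = {a, b}" "a < b" and sep: "(a < x \<and> x < b) \<noteq> (a < y \<and> y < b)"
    unfolding separates_def by blast
  have "(x < a \<and> a < y) \<noteq> (x < b \<and> b < y)"
    using sep assms(2-4) e by (cases "a < x \<and> x < b") auto
  then have "card (e \<inter> {x<..<y}) = 1"
    unfolding e(1) by (cases "x < a \<and> a < y") (auto simp: Int_insert_left)
  then show False using assms(5) by simp
qed

lemma chord_subset: "noncrossing_matching M S \<Longrightarrow> e \<in> M \<Longrightarrow> e \<subseteq> S"
  unfolding noncrossing_matching_def perfect_matching_def by blast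

lemma chord_card: "noncrossing_matching M S \<Longrightarrow> e \<in> M \<Longrightarrow> card e = 2"
  unfolding noncrossing_matching_def perfect_matching_def by blast

lemma chord_unique:
  "noncrossing_matching M S \<Longrightarrow> e \<in> M \<Longrightarrow> f \<in> M \<Longrightarrow> x \<in> e \<Longrightarrow> x \<in> f \<Longrightarrow> e = f"
  unfolding noncrossing_matching_def perfect_matching_def by blast

lemma chord_exists: "noncrossing_matching M S \<Longrightarrow> x \<in> S \<Longrightarrow> \<exists>e\<in>M. x \<in> e"
  unfolding noncrossing_matching_def perfect_matching_def by (auto dest: ex1_implies_ex)

lemma chord_partner:
  assumes nc: "noncrossing_matching M S" and x: "x \<in> S"
  obtains z where "{x, z} \<in> M" "z \<in> S" "z \<noteq> x"
proof -
  obtain e where e: "e \<in> M" "x \<in> e" using chord_exists[OF nc x] by blast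
  then obtain z where "e = {x, z}" "z \<noteq> x"
    using chord_card[OF nc e(1)] by (auto simp: card_2_iff doubleton_eq_iff)
  then show ?thesis using that e chord_subset[OF nc e(1)] by blast
qed

lemma chords_not_crossing:
  "noncrossing_matching M S \<Longrightarrow> {a, b} \<in> M \<Longrightarrow> {c, d} \<in> M \<Longrightarrow>
    a < c \<Longrightarrow> c < b \<Longrightarrow> b < d \<Longrightarrow> False"
  unfolding noncrossing_matching_def crosses_def by fastforce

lemma even_card_chord_inter_open:
  assumes nc: "noncrossing_matching M S" and e: "e \<in> M" and chord: "{p, q} \<in> M" "p < q"
  shows "even (card (e \<inter> {p<..<q}))"
proof (cases "e = {p, q}")
  case False
  obtain a b where ab: "e = {a, b}" "a < b"
    using chord_card[OF nc e] by (auto simp: card_2_iff) (metis insert_commute linorder_neqE_nat)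
  have "a \<notin> {p, q}" "b \<notin> {p, q}"
    using chord_unique[OF nc e chord(1)] False ab by auto
  moreover have "\<not> (a < p \<and> p < b \<and> b < q)" "\<not> (p < a \<and> a < q \<and> q < b)"
    using chords_not_crossing[OF nc] e chord(1) ab by blast+
  ultimately have "e \<inter> {p<..<q} = {} \<or> e \<inter> {p<..<q} = e"
    using ab by auto
  then show ?thesis using ab by auto
qed auto

lemma even_card_chord_inter_closed:
  assumes nc: "noncrossing_matching M S" and e: "e \<in> M" and chord: "{p, q} \<in> M" "p < q"
  shows "even (card (e \<inter> {p..q}))"
proof (cases "e = {p, q}")
  case False
  then have "p \<notin> e" "q \<notin> e"
    using chord_unique[OF nc e chord(1)] by auto
  then have "e \<inter> {p..q} = e \<inter> {p<..<q}" by (auto simp: order.order_iff_strict)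
  then show ?thesis using even_card_chord_inter_open[OF nc e chord] by simp
qed (use chord(2) in auto)

lemma even_card_chord_diff_closed:
  assumes nc: "noncrossing_matching M S" and e: "e \<in> M" and chord: "{p, q} \<in> M" "p < q"
  shows "even (card (e - {p..q}))"
proof -
  have "finite e" using chord_card[OF nc e] by (simp add: card_ge_0_finite)
  then have "card (e - {p..q}) = card e - card (e \<inter> {p..q})"
    by (metis Diff_Int2 card_Diff_subset_Int Int_lower2 finite_Int inf.commute)
  then show ?thesis
    using chord_card[OF nc e] even_card_chord_inter_closed[OF nc e chord]
    by (metis card_mono \<open>finite e\<close> inf_le1 dvd_diff_nat even_numeral)
qed

lemma same_region_if_even_crossings:
  assumes nc: "noncrossing_matching M S" and "x \<notin> S" "y \<notin> S" "x \<le> y"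
    and even: "\<And>e. e \<in> M \<Longrightarrow> even (card (e \<inter> {x<..<y}))"
  shows "same_region M x y"
  unfolding same_region_def
proof
  fix e assume e: "e \<in> M"
  show "\<not> separates e x y"
    using not_separates_if_even_between chord_card[OF nc e] chord_subset[OF nc e] assms(2-4) even[OF e]
    by blast
qed

lemma same_region_inner_neighbours:
  assumes nc: "noncrossing_matching M S" and chord: "{p, q} \<in> M" "p < q"
    and "Suc p = x" "Suc y = q" "x \<le> y" "x \<notin> S" "y \<notin> S"
  shows "same_region M x y"
proof (rule same_region_if_even_crossings[OF nc assms(7,8,6)])
  fix e assume e: "e \<in> M"
  have "s \<noteq> x" "s \<noteq> y" if "s \<in> e" for s
    using that chord_subset[OF nc e] assms(7,8) by blast+
  then have "e \<inter> {x<..<y} = e \<inter> {p<..<q}"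
    using assms(4,5) by fastforce
  then show "even (card (e \<inter> {x<..<y}))" using even_card_chord_inter_open[OF nc e chord] by simp
qed

lemma same_region_outer_neighbours:
  assumes nc: "noncrossing_matching M S" and chord: "{p, q} \<in> M" "p < q"
    and "Suc x = p" "Suc q = y" "x \<notin> S" "y \<notin> S"
  shows "same_region M x y"
proof (rule same_region_if_even_crossings[OF nc assms(6,7)])
  show "x \<le> y" using assms(3-5) by simp
  fix e assume e: "e \<in> M"
  have "e \<inter> {x<..<y} = e \<inter> {p..q}"
    using assms(4,5) by auto
  then show "even (card (e \<inter> {x<..<y}))" using even_card_chord_inter_closed[OF nc e chord] by simp
qed

(* Arcs through the point where the circle is cut open: they avoid [p, q] and pass all other points. *)
lemma same_region_before_chord:
  assumes nc: "noncrossing_matching M S" and chord: "{p, q} \<in> M" "p < q"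
    and "Suc y = p" "x \<le> y" "x \<notin> S" "y \<notin> S"
    and bounds: "\<And>s. s \<in> S \<Longrightarrow> x \<le> s \<and> s \<le> q"
  shows "same_region M x y"
proof (rule same_region_if_even_crossings[OF nc assms(6,7,5)])
  fix e assume e: "e \<in> M"
  have "s \<noteq> x \<and> s \<noteq> y \<and> x \<le> s \<and> s \<le> q" if "s \<in> e" for s
    using that chord_subset[OF nc e] assms(6,7) bounds by blast
  then have "e \<inter> {x<..<y} = e - {p..q}"
    using assms(4) by fastforce
  then show "even (card (e \<inter> {x<..<y}))" using even_card_chord_diff_closed[OF nc e chord] by simp
qed

lemma same_region_after_chord:
  assumes nc: "noncrossing_matching M S" and chord: "{p, q} \<in> M" "p < q"
    and "Suc q = x" "x \<le> y" "x \<notin> S" "y \<notin> S"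
    and bounds: "\<And>s. s \<in> S \<Longrightarrow> p \<le> s \<and> s \<le> y"
  shows "same_region M x y"
proof (rule same_region_if_even_crossings[OF nc assms(6,7,5)])
  fix e assume e: "e \<in> M"
  have "s \<noteq> x \<and> s \<noteq> y \<and> p \<le> s \<and> s \<le> y" if "s \<in> e" for s
    using that chord_subset[OF nc e] assms(6,7) bounds by blast
  then have "e \<inter> {x<..<y} = e - {p..q}"
    using assms(4) by fastforce
  then show "even (card (e \<inter> {x<..<y}))" using even_card_chord_diff_closed[OF nc e chord] by simp
qed

lemma even_card_between_chord:
  assumes nc: "noncrossing_matching M S" and "finite S" and chord: "{p, q} \<in> M" "p < q"
  shows "even (card (S \<inter> {p<..<q}))"
proof -
  have finM: "finite M"
    using chord_subset[OF nc] by (intro finite_subset[of M "Pow S"]) (use assms(2) in auto)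
  have "S \<inter> {p<..<q} = (\<Union>e\<in>M. e \<inter> {p<..<q})"
    using chord_subset[OF nc] chord_exists[OF nc] by blast
  moreover have "card (\<Union>e\<in>M. e \<inter> {p<..<q}) = (\<Sum>e\<in>M. card (e \<inter> {p<..<q}))"
  proof (rule card_UN_disjoint[OF finM])
    show "\<forall>e\<in>M. finite (e \<inter> {p<..<q})" by simp
    show "\<forall>e\<in>M. \<forall>f\<in>M. e \<noteq> f \<longrightarrow> e \<inter> {p<..<q} \<inter> (f \<inter> {p<..<q}) = {}"
      using chord_unique[OF nc] by blast
  qed
  moreover have "even (\<Sum>e\<in>M. card (e \<inter> {p<..<q}))"
    using even_card_chord_inter_open[OF nc _ chord] by (intro dvd_sum) blast
  ultimately show ?thesis by simp
qed

lemma card_same_parity_between: "card {s. p < s \<and> s < p + 2 * n \<and> even (s - p)} = n - 1"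
proof -
  have "{s. p < s \<and> s < p + 2 * n \<and> even (s - p)} = (\<lambda>t. p + 2 * t) ` {0<..<n}"
  proof (intro set_eqI iffI)
    fix s assume s: "s \<in> {s. p < s \<and> s < p + 2 * n \<and> even (s - p)}"
    then obtain t where "s - p = 2 * t" by blast
    with s show "s \<in> (\<lambda>t. p + 2 * t) ` {0<..<n}" by (intro image_eqI[of _ _ t]) auto
  qed auto
  then show ?thesis by (simp add: card_image inj_on_def)
qed

lemma chord_endpoints_differ_mod_4:
  assumes nc: "noncrossing_matching M {s. even s = ev \<and> s < N}" and chord: "{p, q} \<in> M"
  shows "p mod 4 \<noteq> q mod 4"
proof
  assume mod4: "p mod 4 = q mod 4"
  define S where "S = {s. even s = ev \<and> s < N}"
  have "p \<noteq> q" using chord_card[OF nc chord] by auto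
  then obtain a b where ab: "{a, b} \<in> M" "a < b" "b mod 4 = a mod 4" "a \<in> S" "b \<in> S"
  proof (cases "p < q")
    case True
    then show ?thesis
      using that[of p q] chord mod4 chord_subset[OF nc chord] unfolding S_def by auto
  next
    case False
    then show ?thesis
      using that[of q p] \<open>p \<noteq> q\<close> chord mod4 chord_subset[OF nc chord] unfolding S_def
      by (auto simp: insert_commute)
  qed
  then obtain m where m: "b = a + 2 * (2 * m)"
    by (metis less_imp_le_nat mod_eq_dvd_iff_nat dvd_def le_add_diff_inverse mult.assoc numeral_Bit0_eq_double)
  have "S \<inter> {a<..<b} = {s. a < s \<and> s < a + 2 * (2 * m) \<and> even (s - a)}"
    using ab(4,5) m unfolding S_def by auto
  then have "card (S \<inter> {a<..<b}) = 2 * m - 1"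
    using card_same_parity_between[of a "2 * m"] by simp
  moreover have "m > 0" using ab(2) m by simp
  moreover have "even (card (S \<inter> {a<..<b}))"
    using even_card_between_chord[OF nc[folded S_def] _ ab(1,2)] unfolding S_def by simp
  ultimately show False by simp
qed

section \<open>Permutations of region partitions\<close>

definition cyclically_between :: "nat \<Rightarrow> nat \<Rightarrow> nat \<Rightarrow> bool" where
  "cyclically_between i j k \<longleftrightarrow> (if i < j then i < k \<and> k < j else i < k \<or> k < j)"

lemma perm_of_partition_eqI:
  assumes "B \<in> P" "finite B" "i \<in> B" "j \<in> B" "\<And>B'. B' \<in> P \<Longrightarrow> i \<in> B' \<Longrightarrow> B' = B"
    and "\<And>k. k \<in> B \<Longrightarrow> \<not> cyclically_between i j k"
  shows "perm_of_partition P i = j"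
proof -
  have "(THE B. B \<in> P \<and> i \<in> B) = B"
  proof (rule the_equality)
    show "B \<in> P \<and> i \<in> B" using assms(1,3) ..
    show "B' = B" if "B' \<in> P \<and> i \<in> B'" for B'
      using that by (intro assms(5)) simp_all
  qed
  moreover have "\<exists>B\<in>P. i \<in> B"
    using assms(1,3) by blast
  ultimately have perm: "perm_of_partition P i =
      (if \<exists>k\<in>B. i < k then Min {k \<in> B. i < k} else Min B)"
    by (simp add: perm_of_partition_def Let_def)
  show ?thesis
  proof (cases "i < j")
    case True
    have "j \<le> k" if "k \<in> B" "i < k" for k
      using assms(6)[OF that(1)] that(2) True by (auto simp: cyclically_between_def)
    then have "Min {k \<in> B. i < k} = j"
      using assms(2,4) True by (intro Min_eqI) auto
    then show ?thesis
      using True assms(4) perm by auto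
  next
    case False
    have "\<not> i < k" "j \<le> k" if "k \<in> B" for k
      using assms(6)[OF that] False by (auto simp: cyclically_between_def)
    then have "\<not> (\<exists>k\<in>B. i < k)" "Min B = j"
      using assms(2,4) by (auto intro: Min_eqI)
    then show ?thesis
      using perm by simp
  qed
qed

lemma perm_of_partition_outside: "i \<notin> \<Union>P \<Longrightarrow> perm_of_partition P i = i"
  by (auto simp: perm_of_partition_def)

lemma perm_of_region_partition_outside:
  "i \<notin> {1..d} \<Longrightarrow> perm_of_partition (region_partition M pos d) i = i"
  by (rule perm_of_partition_outside) (auto simp: region_partition_def)

lemma perm_of_region_partition_eqI:
  assumes "i \<in> {1..d}" "j \<in> {1..d}" "same_region M (pos i) (pos j)"
    and "\<And>k. k \<in> {1..d} \<Longrightarrow> cyclically_between i j k \<Longrightarrow> \<not> same_region M (pos i) (pos k)"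
  shows "perm_of_partition (region_partition M pos d) i = j"
proof (rule perm_of_partition_eqI)
  let ?B = "\<lambda>i. {j \<in> {1..d}. same_region M (pos i) (pos j)}"
  show "?B i \<in> region_partition M pos d"
    using assms(1) by (simp add: region_partition_def)
  show "B' = ?B i" if B'P: "B' \<in> region_partition M pos d" and iB': "i \<in> B'" for B'
  proof -
    obtain k where B': "B' = ?B k"
      using B'P unfolding region_partition_def by blast
    with iB' have ki: "same_region M (pos k) (pos i)" by simp
    have "same_region M (pos k) (pos j) \<longleftrightarrow> same_region M (pos i) (pos j)" for j
      using ki same_region_sym same_region_trans by meson
    then show ?thesis using B' by simp
  qed
  show "i \<in> ?B i" "j \<in> ?B i"
    using assms(1-3) same_region_refl by auto
  show "\<not> cyclically_between i j k" if "k \<in> ?B i" for k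
    using that assms(4)[of k] by auto
qed simp

lemma perm_of_region_partition_chordI:
  assumes "{p, q} \<in> M" "p < q" "i \<in> {1..d}" "j \<in> {1..d}" "same_region M (pos i) (pos j)"
    and "\<And>k. k \<in> {1..d} \<Longrightarrow> cyclically_between i j k \<Longrightarrow>
      (p < pos k \<and> pos k < q) \<noteq> (p < pos i \<and> pos i < q)"
  shows "perm_of_partition (region_partition M pos d) i = j"
proof (rule perm_of_region_partition_eqI[OF assms(3-5)])
  fix k assume "k \<in> {1..d}" "cyclically_between i j k"
  then have "(p < pos i \<and> pos i < q) \<noteq> (p < pos k \<and> pos k < q)"
    using assms(6) by auto
  then show "\<not> same_region M (pos i) (pos k)"
    by (rule not_same_region_if_chord_separates[OF assms(1,2)])
qed

section \<open>The boundary positions\<close>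

lemma odd_mod_4: "odd (s::nat) \<Longrightarrow> s mod 4 = 1 \<or> s mod 4 = 3"
  by presburger

lemma even_mod_4: "even (s::nat) \<Longrightarrow> s mod 4 = 0 \<or> s mod 4 = 2"
  by presburger

lemma even_Tpos: "even (Tpos i)" and even_Bpos: "even (Bpos i)"
  and odd_Lpos: "1 \<le> i \<Longrightarrow> odd (Lpos i)" and odd_Rpos: "1 \<le> i \<Longrightarrow> odd (Rpos i)"
  unfolding Tpos_def Bpos_def Lpos_def Rpos_def by (cases i; simp)+

lemma Suc_Tpos: "1 \<le> i \<Longrightarrow> Suc (Tpos i) = Lpos i"
  and Suc_Lpos: "1 \<le> i \<Longrightarrow> Suc (Lpos i) = Bpos i"
  and Suc_Bpos: "1 \<le> i \<Longrightarrow> Suc (Bpos i) = Rpos i"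
  and Suc_Rpos: "1 \<le> i \<Longrightarrow> Suc (Rpos i) = Tpos (Suc i)"
  unfolding Tpos_def Bpos_def Lpos_def Rpos_def by simp_all

lemma Tpos_mono: "i \<le> j \<Longrightarrow> Tpos i \<le> Tpos j" and Lpos_mono: "i \<le> j \<Longrightarrow> Lpos i \<le> Lpos j"
  and Bpos_mono: "i \<le> j \<Longrightarrow> Bpos i \<le> Bpos j" and Rpos_mono: "i \<le> j \<Longrightarrow> Rpos i \<le> Rpos j"
  unfolding Tpos_def Bpos_def Lpos_def Rpos_def by simp_all

lemmas position_simps = even_Tpos even_Bpos odd_Lpos odd_Rpos Suc_Tpos Suc_Lpos Suc_Bpos Suc_Rpos
  Tpos_mono Lpos_mono Bpos_mono Rpos_mono

lemma LR_points_eq_odd: "Lpos ` {1..d} \<union> Rpos ` {1..d} = {s. odd s \<and> s < 4 * d}"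
proof (intro set_eqI iffI)
  fix s assume s: "s \<in> {s. odd s \<and> s < 4 * d}"
  then have "s mod 4 = 1 \<or> s mod 4 = 3" using odd_mod_4 by simp
  then have "s = Lpos (s div 4 + 1) \<or> s = Rpos (s div 4 + 1)"
    unfolding Lpos_def Rpos_def using div_mult_mod_eq[of s 4] by (elim disjE) simp_all
  moreover have "s div 4 + 1 \<in> {1..d}" using s by auto
  ultimately show "s \<in> Lpos ` {1..d} \<union> Rpos ` {1..d}" by blast
next
  fix s assume "s \<in> Lpos ` {1..d} \<union> Rpos ` {1..d}"
  then obtain i where "i \<in> {1..d}" "s = Lpos i \<or> s = Rpos i" by blast
  then show "s \<in> {s. odd s \<and> s < 4 * d}"
    unfolding Lpos_def Rpos_def by (cases i) auto
qed

lemma TB_points_eq_even: "Tpos ` {1..d} \<union> Bpos ` {1..d} = {s. even s \<and> s < 4 * d}"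
proof (intro set_eqI iffI)
  fix s assume s: "s \<in> {s. even s \<and> s < 4 * d}"
  then have "s mod 4 = 0 \<or> s mod 4 = 2" using even_mod_4 by simp
  then have "s = Tpos (s div 4 + 1) \<or> s = Bpos (s div 4 + 1)"
    unfolding Tpos_def Bpos_def using div_mult_mod_eq[of s 4] by (elim disjE) simp_all
  moreover have "s div 4 + 1 \<in> {1..d}" using s by auto
  ultimately show "s \<in> Tpos ` {1..d} \<union> Bpos ` {1..d}" by blast
next
  fix s assume "s \<in> Tpos ` {1..d} \<union> Bpos ` {1..d}"
  then obtain i where "i \<in> {1..d}" "s = Tpos i \<or> s = Bpos i" by blast
  then show "s \<in> {s. even s \<and> s < 4 * d}"
    unfolding Tpos_def Bpos_def by (cases i) auto
qed

lemma Rpos_matched_to_Lpos: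
  assumes nc: "noncrossing_matching M {s. odd s \<and> s < 4 * d}" and i: "i \<in> {1..d}"
  obtains j where "j \<in> {1..d}" "{Rpos i, Lpos j} \<in> M"
proof -
  have x: "Rpos i \<in> {s. odd s \<and> s < 4 * d}"
    using i LR_points_eq_odd by blast
  obtain z where "{Rpos i, z} \<in> M" "z \<in> {s. odd s \<and> s < 4 * d}"
    using chord_partner[OF nc x] by blast
  then have z: "{Rpos i, z} \<in> M" "odd z" "z < 4 * d" by simp_all
  have "Rpos i mod 4 \<noteq> z mod 4"
    using chord_endpoints_differ_mod_4[of M False "4 * d"] nc z(1) by simp
  moreover have "Rpos i mod 4 = 3" using i unfolding Rpos_def by (cases i) auto
  ultimately have "z mod 4 = 1"
    using odd_mod_4[OF z(2)] by simp
  then have "z = Lpos (z div 4 + 1)"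
    unfolding Lpos_def using div_mult_mod_eq[of z 4] by simp
  moreover have "z div 4 + 1 \<in> {1..d}"
    using z(3) by auto
  ultimately show ?thesis using that z(1) by metis
qed

lemma Tpos_matched_to_Bpos:
  assumes nc: "noncrossing_matching M {s. even s \<and> s < 4 * d}" and i: "i \<in> {1..d}"
  obtains j where "j \<in> {1..d}" "{Tpos i, Bpos j} \<in> M"
proof -
  have x: "Tpos i \<in> {s. even s \<and> s < 4 * d}"
    using i TB_points_eq_even by blast
  obtain z where "{Tpos i, z} \<in> M" "z \<in> {s. even s \<and> s < 4 * d}"
    using chord_partner[OF nc x] by blast
  then have z: "{Tpos i, z} \<in> M" "even z" "z < 4 * d" by simp_all
  have "Tpos i mod 4 \<noteq> z mod 4"
    using chord_endpoints_differ_mod_4[of M True "4 * d"] nc z(1) by simp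
  moreover have "Tpos i mod 4 = 0" unfolding Tpos_def by (cases i) auto
  ultimately have "z mod 4 = 2"
    using even_mod_4[OF z(2)] by simp
  then have "z = Bpos (z div 4 + 1)"
    unfolding Bpos_def using div_mult_mod_eq[of z 4] by simp
  moreover have "z div 4 + 1 \<in> {1..d}"
    using z(3) by auto
  ultimately show ?thesis using that z(1) by metis
qed

lemma LR_perm_bottom:
  assumes nc: "noncrossing_matching M {s. odd s \<and> s < 4 * d}" and i: "i \<in> {1..d}" and j: "j \<in> {1..d}"
    and chord: "{Rpos i, Lpos j} \<in> M"
  shows "perm_of_partition (region_partition M Bpos d) i = j"
proof (cases "i < j")
  case True
  have pq: "Rpos i < Lpos j" using True by (simp add: Rpos_def Lpos_def)
  have "same_region M (Bpos i) (Bpos j)"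
    by (rule same_region_outer_neighbours[OF nc chord pq]) (use i j in \<open>auto simp: position_simps\<close>)
  then show ?thesis
    by (rule perm_of_region_partition_chordI[OF chord pq i j])
      (use i j True in
        \<open>simp add: cyclically_between_def Bpos_def Rpos_def Lpos_def split: if_splits; linarith\<close>)
next
  case False
  have chord': "{Lpos j, Rpos i} \<in> M" using chord by (simp add: insert_commute)
  have pq: "Lpos j < Rpos i" using False j unfolding Rpos_def Lpos_def by auto
  have "same_region M (Bpos j) (Bpos i)"
    by (rule same_region_inner_neighbours[OF nc chord' pq])
      (use i j False in \<open>auto simp: position_simps\<close>)
  then show ?thesis
    by (rule perm_of_region_partition_chordI[OF chord' pq i j, OF same_region_sym])
      (use i j False in
        \<open>simp add: cyclically_between_def Bpos_def Rpos_def Lpos_def split: if_splits; linarith\<close>)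
qed

lemma LR_perm_top:
  assumes nc: "noncrossing_matching M {s. odd s \<and> s < 4 * d}" and i: "i \<in> {1..d}" and j: "j \<in> {1..d}"
    and chord: "{Rpos i, Lpos j} \<in> M"
  shows "perm_of_partition (region_partition M Tpos d) j = long_cycle d i"
proof -
  have chord': "{Lpos j, Rpos i} \<in> M" using chord by (simp add: insert_commute)
  consider (before) "i < j" | (after) "j \<le> i" "i < d" | (last) "j \<le> i" "i = d"
    using i by fastforce
  then show ?thesis
  proof cases
    case before
    have pq: "Rpos i < Lpos j" using before by (simp add: Rpos_def Lpos_def)
    have "same_region M (Tpos (Suc i)) (Tpos j)"
      by (rule same_region_inner_neighbours[OF nc chord pq])
        (use i j before in \<open>auto simp: position_simps\<close>)
    moreover have "long_cycle d i = Suc i" using before i j by (simp add: long_cycle_def)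
    ultimately show ?thesis
      by (intro perm_of_region_partition_chordI[OF chord pq j, OF _ same_region_sym])
        (use i j before in \<open>auto simp: cyclically_between_def Tpos_def Rpos_def Lpos_def\<close>)
  next
    case after
    have pq: "Lpos j < Rpos i" using after j unfolding Rpos_def Lpos_def by auto
    have "same_region M (Tpos j) (Tpos (Suc i))"
      by (rule same_region_outer_neighbours[OF nc chord' pq])
        (use i j in \<open>auto simp: position_simps\<close>)
    moreover have "long_cycle d i = Suc i" using after i by (simp add: long_cycle_def)
    ultimately show ?thesis
      by (intro perm_of_region_partition_chordI[OF chord' pq j])
        (use i j after in \<open>auto simp: cyclically_between_def Tpos_def Rpos_def Lpos_def\<close>)
  next
    case last
    have pq: "Lpos j < Rpos i" using last j unfolding Rpos_def Lpos_def by auto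
    have bounds: "Tpos 1 \<le> s \<and> s \<le> Rpos i" if "s \<in> {s. odd s \<and> s < 4 * d}" for s
      using that last by (auto simp: Tpos_def Rpos_def)
    have "same_region M (Tpos 1) (Tpos j)"
      by (rule same_region_before_chord[OF nc chord' pq _ _ _ _ bounds])
        (use j in \<open>auto simp: position_simps\<close>)
    moreover have "long_cycle d i = 1" using last i by (simp add: long_cycle_def)
    ultimately show ?thesis
      by (intro perm_of_region_partition_chordI[OF chord' pq j, OF _ same_region_sym])
        (use i j last in \<open>auto simp: cyclically_between_def Tpos_def Rpos_def Lpos_def\<close>)
  qed
qed

lemma TB_perm_left:
  assumes nc: "noncrossing_matching M {s. even s \<and> s < 4 * d}" and i: "i \<in> {1..d}" and j: "j \<in> {1..d}"
    and chord: "{Tpos i, Bpos j} \<in> M"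
  shows "perm_of_partition (region_partition M Lpos d) j = i"
proof (cases "i \<le> j")
  case True
  have pq: "Tpos i < Bpos j" using True i unfolding Tpos_def Bpos_def by auto
  have "same_region M (Lpos i) (Lpos j)"
    by (rule same_region_inner_neighbours[OF nc chord pq])
      (use i j True in \<open>auto simp: position_simps\<close>)
  then show ?thesis
    by (rule perm_of_region_partition_chordI[OF chord pq j i, OF same_region_sym])
      (use i j True in
        \<open>simp add: cyclically_between_def Tpos_def Bpos_def Lpos_def split: if_splits; linarith\<close>)
next
  case False
  have chord': "{Bpos j, Tpos i} \<in> M" using chord by (simp add: insert_commute)
  have pq: "Bpos j < Tpos i" using False j unfolding Tpos_def Bpos_def by auto
  have "same_region M (Lpos j) (Lpos i)"
    by (rule same_region_outer_neighbours[OF nc chord' pq])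
      (use i j in \<open>auto simp: position_simps\<close>)
  then show ?thesis
    by (rule perm_of_region_partition_chordI[OF chord' pq j i])
      (use i j False in
        \<open>simp add: cyclically_between_def Tpos_def Bpos_def Lpos_def split: if_splits; linarith\<close>)
qed

lemma TB_perm_right:
  assumes nc: "noncrossing_matching M {s. even s \<and> s < 4 * d}" and i: "i \<in> {1..d}" and j: "j \<in> {1..d}"
    and chord: "{Tpos (long_cycle d i), Bpos j} \<in> M"
  shows "perm_of_partition (region_partition M Rpos d) i = j"
proof -
  consider (before) "i < j" "i < d" | (after) "j \<le> i" "i < d" | (last) "i = d"
    using i by fastforce
  then show ?thesis
  proof cases
    case before
    then have chord: "{Tpos (Suc i), Bpos j} \<in> M" using chord i by (simp add: long_cycle_def)
    have pq: "Tpos (Suc i) < Bpos j" using before unfolding Tpos_def Bpos_def by auto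
    have "same_region M (Rpos i) (Rpos j)"
      by (rule same_region_outer_neighbours[OF nc chord pq])
        (use i j in \<open>auto simp: position_simps\<close>)
    then show ?thesis
      by (rule perm_of_region_partition_chordI[OF chord pq i j])
        (use i j before in
          \<open>simp add: cyclically_between_def Tpos_def Bpos_def Rpos_def split: if_splits; linarith\<close>)
  next
    case after
    then have chord: "{Bpos j, Tpos (Suc i)} \<in> M"
      using chord i by (simp add: long_cycle_def insert_commute)
    have pq: "Bpos j < Tpos (Suc i)" using after j unfolding Tpos_def Bpos_def by auto
    have "same_region M (Rpos j) (Rpos i)"
      by (rule same_region_inner_neighbours[OF nc chord pq])
        (use i j after in \<open>auto simp: position_simps\<close>)
    then show ?thesis
      by (rule perm_of_region_partition_chordI[OF chord pq i j, OF same_region_sym])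
        (use i j after in
          \<open>simp add: cyclically_between_def Tpos_def Bpos_def Rpos_def split: if_splits; linarith\<close>)
  next
    case last
    then have chord: "{Tpos 1, Bpos j} \<in> M" using chord i by (simp add: long_cycle_def)
    have pq: "Tpos 1 < Bpos j" using j unfolding Tpos_def Bpos_def by auto
    have bounds: "Tpos 1 \<le> s \<and> s \<le> Rpos i" if "s \<in> {s. even s \<and> s < 4 * d}" for s
      using that last by (auto simp: Tpos_def Rpos_def)
    have "same_region M (Rpos j) (Rpos i)"
      by (rule same_region_after_chord[OF nc chord pq _ _ _ _ bounds])
        (use i j last in \<open>auto simp: position_simps\<close>)
    then show ?thesis
      by (rule perm_of_region_partition_chordI[OF chord pq i j, OF same_region_sym])
        (use i j last in
          \<open>simp add: cyclically_between_def Tpos_def Bpos_def Rpos_def split: if_splits; linarith\<close>)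
  qed
qed

lemma LR_perm_top_comp_bottom:
  assumes nc: "noncrossing_matching M {s. odd s \<and> s < 4 * d}"
  shows "perm_of_partition (region_partition M Tpos d) \<circ> perm_of_partition (region_partition M Bpos d)
    = long_cycle d"
proof
  fix i
  show "(perm_of_partition (region_partition M Tpos d) \<circ> perm_of_partition (region_partition M Bpos d)) i
    = long_cycle d i"
  proof (cases "i \<in> {1..d}")
    case True
    then obtain j where "j \<in> {1..d}" "{Rpos i, Lpos j} \<in> M"
      using Rpos_matched_to_Lpos[OF nc] by blast
    then show ?thesis
      using LR_perm_bottom[OF nc True] LR_perm_top[OF nc True] by simp
  next
    case False
    then have "long_cycle d i = i" unfolding long_cycle_def by (rule if_not_P)
    then show ?thesis using perm_of_region_partition_outside[OF False] by simp
  qed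
qed

lemma TB_perm_left_comp_right:
  assumes nc: "noncrossing_matching M {s. even s \<and> s < 4 * d}"
  shows "perm_of_partition (region_partition M Lpos d) \<circ> perm_of_partition (region_partition M Rpos d)
    = long_cycle d"
proof
  fix i
  show "(perm_of_partition (region_partition M Lpos d) \<circ> perm_of_partition (region_partition M Rpos d)) i
    = long_cycle d i"
  proof (cases "i \<in> {1..d}")
    case True
    then have "long_cycle d i \<in> {1..d}" by (auto simp: long_cycle_def)
    then obtain j where "j \<in> {1..d}" "{Tpos (long_cycle d i), Bpos j} \<in> M"
      using Tpos_matched_to_Bpos[OF nc] by blast
    then show ?thesis
      using TB_perm_right[OF nc True] TB_perm_left[OF nc \<open>long_cycle d i \<in> {1..d}\<close>] by simp
  next
    case False
    then have "long_cycle d i = i" unfolding long_cycle_def by (rule if_not_P)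
    then show ?thesis using perm_of_region_partition_outside[OF False] by simp
  qed
qed

theorem proposition4p22:
  fixes d :: nat
  assumes "d \<ge> 1"
  shows "(\<forall>M. noncrossing_matching M (Lpos ` {1..d} \<union> Rpos ` {1..d}) \<longrightarrow>
            perm_of_partition (region_partition M Tpos d) \<circ>
            perm_of_partition (region_partition M Bpos d) = long_cycle d)
       \<and> (\<forall>M. noncrossing_matching M (Tpos ` {1..d} \<union> Bpos ` {1..d}) \<longrightarrow>
            perm_of_partition (region_partition M Lpos d) \<circ>
            perm_of_partition (region_partition M Rpos d) = long_cycle d)"
proof (intro conjI allI impI)
  fix M
  assume "noncrossing_matching M (Lpos ` {1..d} \<union> Rpos ` {1..d})"
  then show "perm_of_partition (region_partition M Tpos d) \<circ> perm_of_partition (region_partition M Bpos d)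
    = long_cycle d"
    unfolding LR_points_eq_odd by (rule LR_perm_top_comp_bottom)
next
  fix M
  assume "noncrossing_matching M (Tpos ` {1..d} \<union> Bpos ` {1..d})"
  then show "perm_of_partition (region_partition M Lpos d) \<circ> perm_of_partition (region_partition M Rpos d)
    = long_cycle d"
    unfolding TB_points_eq_even by (rule TB_perm_left_comp_right)
qed

end
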